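(* Let $m\ge2$. The polynomial $G_m(t,\beta)$ (in the variable $t$) satisfies: (i) for $0<\beta<1$ all zeros of $G_m(t,\beta)$ are simple and negative; (ii) for $0<\beta<\frac12$, $G_m(t,\beta)$ has exactly $\lfloor\frac m2\rfloor$ zeros in $|t|<1$ and $\lfloor\frac{m-1}2\rfloor$ zeros in $|t|>1$; (iii) for $\frac12<\beta<1$, $G_m(t,\beta)$ has exactly $\lfloor\frac{m-1}2\rfloor$ zeros in $|t|<1$ and $\lfloor\frac m2\rfloor$ zeros in $|t|>1$.
   Context: $G_1(t,\beta)=-1$ and for $m\ge2$, $G_m(t,\beta)=[\beta(t-1)-(m-1)t]G_{m-1}(t,\beta)+t(t-1)\frac{\partial}{\partial t}G_{m-1}(t,\beta)$; $G_m$ is a polynomial of degree at most $m-1$ in $t$. *)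

theory Defs
  imports "HOL-Computational_Algebra.Polynomial"
begin

text \<open>G m beta as a real polynomial in t.  G 1 = -1 and for m >= 2,
  G m = (beta (t-1) - (m-1) t) G (m-1) + t (t-1) d/dt G (m-1).
  The value at m = 0 is an irrelevant filler.\<close>
fun G :: "nat \<Rightarrow> real \<Rightarrow> real poly" where
  "G 0 \<beta> = 0"
| "G (Suc 0) \<beta> = [:-1:]"
| "G (Suc (Suc n)) \<beta> =
     [:-\<beta>, \<beta> - real (Suc n):] * G (Suc n) \<beta> + [:0, -1, 1:] * pderiv (G (Suc n) \<beta>)"

definition GC :: "nat \<Rightarrow> real \<Rightarrow> complex poly" where
  "GC m \<beta> = map_poly complex_of_real (G m \<beta>)"

end

(*
  At a zero r of G_{m-1} the recursion gives G_m(r) = r (r - 1) G_{m-1}'(r), and G_m(0) = -beta G_{m-1}(0).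
  Hence, if the zeros of G_{m-1} are simple and negative, G_m alternates in sign on them, on 0 and on a
  point far to the left, so the m - 1 zeros of G_m are simple, negative and interlace those of G_{m-1}.
  Interlacing lets the number of zeros in (-1, 0) grow by at most one with m, and the sign of
  G_m(-1, beta) fixes its parity. That sign is found by induction on m from
  d/dbeta G_m = (m - 1) (t - 1) G_{m-1} and the reflection G_m(-1, 1 - beta) = (-1)^(m-1) G_m(-1, beta):
  G_m(-1, .) vanishes at 1/2 or at 0, and the mean value theorem carries over the sign of G_{m-1}(-1, .).
*)
theory Submission
  imports Defs
begin

section \<open>Degree and leading coefficient\<close>

lemma coeff_G_Suc_Suc:
  "coeff (G (Suc (Suc n)) b) (Suc k) =
     - (b + real (Suc k)) * coeff (G (Suc n) b) (Suc k) + (b + real k - real (Suc n)) * coeff (G (Suc n) b) k"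
  by (cases k) (simp_all add: coeff_pderiv mult_pCons_left algebra_simps)

lemma degree_G_le: "degree (G (Suc n) b) \<le> n"
proof (induction n)
  case (Suc n)
  show ?case
  proof (rule degree_le, intro allI impI)
    fix i assume "Suc n < i"
    then obtain k where i: "i = Suc k" and "n < k" by (cases i) auto
    then show "coeff (G (Suc (Suc n)) b) i = 0"
      using Suc unfolding i coeff_G_Suc_Suc by (simp add: coeff_eq_0)
  qed
qed simp

lemma coeff_G_top: "coeff (G (Suc n) b) n = - ((b - 1) ^ n)"
proof (induction n)
  case (Suc n)
  have "coeff (G (Suc n) b) (Suc n) = 0"
    using degree_G_le[of n b] by (simp add: coeff_eq_0)
  then show ?case using Suc unfolding coeff_G_Suc_Suc by (simp add: algebra_simps)
qed simp

lemma degree_G: "b \<noteq> 1 \<Longrightarrow> degree (G (Suc n) b) = n"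
  using degree_G_le[of n b] le_degree[of "G (Suc n) b" n] coeff_G_top[of n b] by simp

lemma lead_coeff_G: "b \<noteq> 1 \<Longrightarrow> lead_coeff (G (Suc n) b) = - ((b - 1) ^ n)"
  by (simp add: degree_G coeff_G_top)

lemma G_nonzero: "b \<noteq> 1 \<Longrightarrow> G (Suc n) b \<noteq> 0"
  using lead_coeff_G[of b n] by auto

lemma sgn_lead_coeff_G: "b < 1 \<Longrightarrow> sgn (lead_coeff (G (Suc n) b)) = - ((-1) ^ n)"
  by (simp add: lead_coeff_G sgn_minus)

lemma G_beta_zero_eq: "G (Suc (Suc n)) 0 = [:0, 1:] * G (Suc (Suc n)) 1"
proof (induction n)
  case (Suc n)
  define A where "A = G (Suc (Suc n)) 0"
  define B where "B = G (Suc (Suc n)) 1"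
  have AB: "A = [:0, 1:] * B" using Suc by (simp add: A_def B_def)
  have "G (Suc (Suc (Suc n))) 0 = [:-0, 0 - real (Suc (Suc n)):] * A + [:0, -1, 1:] * pderiv A"
    by (simp only: G.simps A_def)
  also have "\<dots> = [:0, 1:] * ([:-1, 1 - real (Suc (Suc n)):] * B + [:0, -1, 1:] * pderiv B)"
    unfolding AB
    by (rule poly_eq_poly_eq_iff[THEN iffD1], rule ext)
      (simp add: pderiv_mult pderiv_pCons algebra_simps del: mult_pCons_left mult_pCons_right)
  also have "\<dots> = [:0, 1:] * G (Suc (Suc (Suc n))) 1"
    by (simp only: G.simps B_def)
  finally show ?case .
qed simp

lemma poly_G_Suc_Suc_at_root:
  "poly (G (Suc n) b) r = 0 \<Longrightarrow>
   poly (G (Suc (Suc n)) b) r = r * (r - 1) * poly (pderiv (G (Suc n) b)) r"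
  by (simp add: algebra_simps)

section \<open>The derivative with respect to \<open>\<beta>\<close>\<close>

(* Derivatives in beta are taken coefficientwise: real poly carries no topology. *)
definition has_coeffwise_derivative :: "(real \<Rightarrow> real poly) \<Rightarrow> real poly \<Rightarrow> real \<Rightarrow> bool"
  where "has_coeffwise_derivative P P' b \<longleftrightarrow>
    (\<forall>k. ((\<lambda>x. coeff (P x) k) has_real_derivative coeff P' k) (at b))"

lemma has_coeffwise_derivative_const: "has_coeffwise_derivative (\<lambda>x. p) 0 b"
  by (simp add: has_coeffwise_derivative_def)

lemma has_coeffwise_derivative_pCons:
  assumes "(f has_real_derivative f') (at b)" "has_coeffwise_derivative P P' b"
  shows "has_coeffwise_derivative (\<lambda>x. pCons (f x) (P x)) (pCons f' P') b"
  using assms by (auto simp: has_coeffwise_derivative_def coeff_pCons split: nat.split)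

lemma has_coeffwise_derivative_add:
  "has_coeffwise_derivative P P' b \<Longrightarrow> has_coeffwise_derivative Q Q' b \<Longrightarrow>
   has_coeffwise_derivative (\<lambda>x. P x + Q x) (P' + Q') b"
  by (auto simp: has_coeffwise_derivative_def intro!: derivative_eq_intros)

lemma has_coeffwise_derivative_mult:
  assumes "has_coeffwise_derivative P P' b" "has_coeffwise_derivative Q Q' b"
  shows "has_coeffwise_derivative (\<lambda>x. P x * Q x) (P' * Q b + P b * Q') b"
  unfolding has_coeffwise_derivative_def
proof
  fix k
  have "((\<lambda>x. \<Sum>i\<le>k. coeff (P x) i * coeff (Q x) (k - i)) has_real_derivative
         (\<Sum>i\<le>k. coeff P' i * coeff (Q b) (k - i) + coeff (P b) i * coeff Q' (k - i))) (at b)"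
    using assms unfolding has_coeffwise_derivative_def by (intro DERIV_sum) (auto intro!: derivative_eq_intros)
  then show "((\<lambda>x. coeff (P x * Q x) k) has_real_derivative coeff (P' * Q b + P b * Q') k) (at b)"
    by (simp add: coeff_mult sum.distrib)
qed

lemma has_coeffwise_derivative_pderiv:
  "has_coeffwise_derivative P P' b \<Longrightarrow> has_coeffwise_derivative (\<lambda>x. pderiv (P x)) (pderiv P') b"
  by (auto simp: has_coeffwise_derivative_def coeff_pderiv intro!: derivative_eq_intros)

lemma poly_eq_sum_atMost:
  fixes p :: "'a::comm_semiring_1 poly"
  shows "degree p \<le> n \<Longrightarrow> poly p x = (\<Sum>i\<le>n. coeff p i * x ^ i)"
  by (subst (1) poly_as_sum_of_monoms'[symmetric]) (simp_all add: poly_sum poly_monom)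

lemma has_coeffwise_derivative_poly:
  assumes "has_coeffwise_derivative P P' b" "\<And>x. degree (P x) \<le> N"
  shows "((\<lambda>x. poly (P x) t) has_real_derivative poly P' t) (at b)"
proof -
  have "degree P' \<le> N"
  proof (rule degree_le, intro allI impI)
    fix i assume "N < i"
    then have "(\<lambda>x. coeff (P x) i) = (\<lambda>x. 0)"
      using assms(2) by (auto intro: coeff_eq_0 le_less_trans)
    then show "coeff P' i = 0"
      using assms(1) DERIV_const DERIV_unique unfolding has_coeffwise_derivative_def by metis
  qed
  then have "poly P' t = (\<Sum>i\<le>N. coeff P' i * t ^ i)"
    by (rule poly_eq_sum_atMost)
  moreover have "(\<lambda>x. poly (P x) t) = (\<lambda>x. \<Sum>i\<le>N. coeff (P x) i * t ^ i)"
    by (intro ext poly_eq_sum_atMost assms(2))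
  ultimately show ?thesis
    using assms(1) unfolding has_coeffwise_derivative_def by (auto intro!: derivative_eq_intros DERIV_sum)
qed

lemma has_coeffwise_derivative_G:
  "has_coeffwise_derivative (\<lambda>x. G (Suc n) x) (smult (real n) ([:-1, 1:] * G n b)) b"
proof (induction n)
  case 0
  then show ?case using has_coeffwise_derivative_const[of "[:-1:]" b] by simp
next
  case (Suc n)
  define D where "D = smult (real n) ([:-1, 1:] * G n b)"
  have "has_coeffwise_derivative (\<lambda>x. [:-x, x - real (Suc n):]) [:-1, 1:] b"
    by (intro has_coeffwise_derivative_pCons has_coeffwise_derivative_const derivative_eq_intros) auto
  then have "has_coeffwise_derivative (\<lambda>x. G (Suc (Suc n)) x)
      ([:-1, 1:] * G (Suc n) b + [:-b, b - real (Suc n):] * D + (0 * pderiv (G (Suc n) b) + [:0, -1, 1:] * pderiv D)) b"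
    unfolding G.simps D_def
    by (intro has_coeffwise_derivative_add has_coeffwise_derivative_mult Suc
        has_coeffwise_derivative_pderiv has_coeffwise_derivative_const)
  moreover have "[:-1, 1:] * G (Suc n) b + [:-b, b - real (Suc n):] * D + (0 * pderiv (G (Suc n) b) + [:0, -1, 1:] * pderiv D)
        = smult (real (Suc n)) ([:-1, 1:] * G (Suc n) b)"
  proof (cases n)
    case (Suc n')
    show ?thesis unfolding D_def Suc G.simps
      by (rule poly_eq_poly_eq_iff[THEN iffD1], rule ext)
        (simp add: pderiv_mult pderiv_pCons pderiv_smult algebra_simps del: mult_pCons_left mult_pCons_right)
  qed (simp add: D_def)
  ultimately show ?case by simp
qed

lemma DERIV_G_beta:
  "((\<lambda>x. poly (G (Suc n) x) t) has_real_derivative real n * (t - 1) * poly (G n b) t) (at b)"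
  using has_coeffwise_derivative_poly[OF has_coeffwise_derivative_G degree_G_le]
  by (simp add: algebra_simps)

section \<open>The value at \<open>t = -1\<close>\<close>

lemma DERIV_G_beta_at_minus_one:
  "((\<lambda>x. poly (G (Suc n) x) (-1)) has_real_derivative - 2 * real n * poly (G n b) (-1)) (at b)"
  using DERIV_G_beta[of n "-1" b] by (simp add: algebra_simps)

lemma G_minus_one_reflect: "poly (G (Suc n) (1 - b)) (-1) = (-1) ^ n * poly (G (Suc n) b) (-1)"
proof (induction n arbitrary: b)
  case (Suc n)
  define f where "f x = poly (G (Suc (Suc n)) x) (-1) + (-1) ^ n * poly (G (Suc (Suc n)) (1 - x)) (-1)" for x
  (* f has derivative 0 by the induction hypothesis; f 0 = f 1 and G_beta_zero_eq then force f = 0. *)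
  have "(f has_real_derivative 0) (at x)" for x
  proof -
    have "(f has_real_derivative
        - 2 * real (Suc n) * poly (G (Suc n) x) (-1)
        + (-1) ^ n * (- 2 * real (Suc n) * poly (G (Suc n) (1 - x)) (-1) * - 1)) (at x)"
      unfolding f_def
      by (intro DERIV_add DERIV_cmult DERIV_G_beta_at_minus_one DERIV_chain2[OF DERIV_G_beta_at_minus_one])
        (auto intro!: derivative_eq_intros)
    then show ?thesis using Suc[of x] by (simp add: algebra_simps)
  qed
  then have f_const: "f x = f y" for x y
    by (intro DERIV_isconst_all) auto
  have "poly (G (Suc (Suc n)) 0) (-1) = - poly (G (Suc (Suc n)) 1) (-1)"
    unfolding G_beta_zero_eq by (simp del: G.simps)
  then have "f 0 = 0"
    using f_const[of 0 1] unfolding f_def by (cases "even n") auto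
  then show ?case using f_const[of b 0] unfolding f_def by (cases "even n") auto
qed simp

lemma neg_one_power_eq_iff: "((-1::real) ^ i = (-1) ^ j) \<longleftrightarrow> (even i \<longleftrightarrow> even j)"
  by (simp add: minus_one_power_iff)

lemma sgn_diff_eq_sgn_DERIV:
  fixes f :: "real \<Rightarrow> real"
  assumes "a < b" "\<And>x. (f has_real_derivative f' x) (at x)" "\<And>x. a < x \<Longrightarrow> x < b \<Longrightarrow> sgn (f' x) = s"
  shows "sgn (f b - f a) = s"
proof -
  obtain z where "a < z" "z < b" "f b - f a = (b - a) * f' z"
    using MVT2[OF assms(1,2)] by blast
  then show ?thesis using assms(1,3) by (simp add: sgn_mult)
qed

lemma sgn_G_minus_one_below_half:
  assumes "0 < b" "b < 1/2"
  shows "sgn (poly (G (Suc n) b) (-1)) = (-1) ^ (Suc n + Suc n div 2)"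
  using assms
proof (induction n arbitrary: b)
  case (Suc n)
  define f where "f x = poly (G (Suc (Suc n)) x) (-1)" for x
  have f': "(f has_real_derivative - 2 * real (Suc n) * poly (G (Suc n) x) (-1)) (at x)" for x
    unfolding f_def by (rule DERIV_G_beta_at_minus_one)
  have sgn_f': "sgn (- 2 * real (Suc n) * poly (G (Suc n) x) (-1)) = - ((-1) ^ (Suc n + Suc n div 2))"
    if "0 < x" "x < 1/2" for x
    using Suc.IH[OF that] by (simp add: sgn_mult)
  have "sgn (f b) = (-1) ^ (Suc (Suc n) + Suc (Suc n) div 2)"
  proof (cases "even n")
    case True
    then have "f (1/2) = 0"
      using G_minus_one_reflect[of "Suc n" "1/2"] unfolding f_def by simp
    moreover have "sgn (f (1/2) - f b) = - ((-1) ^ (Suc n + Suc n div 2))"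
      by (rule sgn_diff_eq_sgn_DERIV[OF _ f']) (use Suc.prems sgn_f' in auto)
    moreover have "(-1::real) ^ (Suc n + Suc n div 2) = (-1) ^ (Suc (Suc n) + Suc (Suc n) div 2)"
      unfolding neg_one_power_eq_iff using True by presburger
    ultimately show ?thesis by (simp add: sgn_minus)
  next
    case False
    have "f 1 = f 0"
      using G_minus_one_reflect[of "Suc n" 0] False unfolding f_def by simp
    moreover have "f 0 = - f 1"
      unfolding f_def G_beta_zero_eq by (simp del: G.simps)
    ultimately have "f 0 = 0" by simp
    moreover have "sgn (f b - f 0) = - ((-1) ^ (Suc n + Suc n div 2))"
      by (rule sgn_diff_eq_sgn_DERIV[OF _ f']) (use Suc.prems sgn_f' in auto)
    moreover have "(-1::real) ^ (Suc n + Suc n div 2) = - ((-1) ^ (Suc (Suc n) + Suc (Suc n) div 2))"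
      using False by (simp add: minus_one_power_iff; presburger)
    ultimately show ?thesis by simp
  qed
  then show ?case unfolding f_def .
qed simp

lemma sgn_G_minus_one_above_half:
  assumes "1/2 < b" "b < 1"
  shows "sgn (poly (G (Suc n) b) (-1)) = (-1) ^ (Suc n + n div 2)"
proof -
  have "sgn (poly (G (Suc n) b) (-1)) = (-1) ^ n * sgn (poly (G (Suc n) (1 - b)) (-1))"
    using G_minus_one_reflect[of n b] by (simp add: sgn_mult)
  also have "\<dots> = (-1) ^ (n + (Suc n + Suc n div 2))"
    using assms by (simp add: sgn_G_minus_one_below_half power_add)
  also have "\<dots> = (-1) ^ (Suc n + n div 2)"
    unfolding neg_one_power_eq_iff by presburger
  finally show ?thesis .
qed

lemma G_minus_one_nonzero:
  assumes "0 < b" "b < 1" "b \<noteq> 1/2"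
  shows "poly (G (Suc n) b) (-1) \<noteq> 0"
proof -
  have "sgn (poly (G (Suc n) b) (-1)) \<noteq> 0"
    using assms sgn_G_minus_one_below_half[of b n] sgn_G_minus_one_above_half[of b n]
    by (cases "b < 1/2") auto
  then show ?thesis by auto
qed

section \<open>Real polynomials with only simple real zeros\<close>

lemma sgn_prod_diff:
  fixes S :: "real set"
  assumes "finite S" "x \<notin> S"
  shows "sgn (\<Prod>s\<in>S. x - s) = (-1) ^ card {s\<in>S. x < s}"
  using assms
proof (induction S rule: finite_induct)
  case (insert a S)
  have "{s\<in>insert a S. x < s} = (if x < a then insert a {s\<in>S. x < s} else {s\<in>S. x < s})"
    by auto
  moreover have "sgn (x - a) = (if x < a then -1 else 1)"
    using insert.prems by auto
  ultimately show ?case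
    using insert by (simp add: sgn_mult)
qed simp

lemma real_poly_decompose_distinct_roots:
  fixes p :: "real poly"
  assumes "p \<noteq> 0" "card {x. poly p x = 0} = degree p"
  shows "smult (lead_coeff p) (\<Prod>x | poly p x = 0. [:-x, 1:]) = p"
  using assms
proof (induction "degree p" arbitrary: p rule: less_induct)
  case less
  show ?case
  proof (cases "degree p = 0")
    case True
    then have "{x. poly p x = 0} = {}"
      using less.prems poly_roots_finite[OF less.prems(1)] by auto
    then show ?thesis using True by (auto elim: degree_eq_zeroE)
  next
    case False
    have fin: "finite {x. poly p x = 0}" using less.prems(1) by (rule poly_roots_finite)
    then obtain z where z: "poly p z = 0" using False less.prems(2) by fastforce
    then obtain q where q: "p = [:-z, 1:] * q" using poly_eq_0_iff_dvd by blast
    have q0: "q \<noteq> 0" using q less.prems by auto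
    have dq: "degree p = Suc (degree q)" using q q0 by (simp add: degree_mult_eq del: mult_pCons_left)
    have sub: "{x. poly p x = 0} - {z} \<subseteq> {x. poly q x = 0}" using q by auto
    have "card {x. poly q x = 0} \<le> card ({x. poly p x = 0} - {z})"
      using card_poly_roots_bound[OF q0] less.prems(2) dq fin z by auto
    then have roots_q: "{x. poly q x = 0} = {x. poly p x = 0} - {z}"
      using card_seteq[OF poly_roots_finite[OF q0] sub] by auto
    then have "card {x. poly q x = 0} = degree q"
      using less.prems(2) dq fin z by simp
    then have IH: "smult (lead_coeff q) (\<Prod>x | poly q x = 0. [:-x, 1:]) = q"
      using less.hyps[of q] dq q0 by auto
    have "lead_coeff p = lead_coeff q"
      using q by (simp add: lead_coeff_mult del: mult_pCons_left)
    moreover have "(\<Prod>x | poly p x = 0. [:-x, 1:]) = [:-z, 1:] * (\<Prod>x | poly q x = 0. [:-x, 1:])"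
      unfolding roots_q using prod.remove[OF fin, of z] z by (simp del: mult_pCons_left)
    ultimately show ?thesis
      using IH q by (metis mult_smult_right)
  qed
qed

lemma sgn_poly_distinct_roots:
  fixes p :: "real poly"
  assumes "p \<noteq> 0" "card {x. poly p x = 0} = degree p" "poly p x \<noteq> 0"
  shows "sgn (poly p x) = sgn (lead_coeff p) * (-1) ^ card {s. poly p s = 0 \<and> x < s}"
proof -
  define S where "S = {s. poly p s = 0}"
  have fin: "finite S" unfolding S_def using assms(1) by (rule poly_roots_finite)
  have "poly p x = lead_coeff p * (\<Prod>s\<in>S. x - s)"
    using arg_cong[OF real_poly_decompose_distinct_roots[OF assms(1,2)], of "\<lambda>q. poly q x"]
    by (simp add: S_def poly_prod)
  moreover have "sgn (\<Prod>s\<in>S. x - s) = (-1) ^ card {s. poly p s = 0 \<and> x < s}"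
    using sgn_prod_diff[of S x] fin assms(3) by (simp add: S_def)
  ultimately show ?thesis by (simp add: sgn_mult)
qed

lemma sgn_pderiv_distinct_roots:
  fixes p :: "real poly"
  assumes "p \<noteq> 0" "card {x. poly p x = 0} = degree p" "poly p r = 0"
  shows "sgn (poly (pderiv p) r) = sgn (lead_coeff p) * (-1) ^ card {s. poly p s = 0 \<and> r < s}"
proof -
  define S where "S = {s. poly p s = 0}"
  define c where "c = lead_coeff p"
  define q where "q = (\<Prod>s\<in>S - {r}. [:-s, 1:])"
  have fin: "finite S" unfolding S_def using assms(1) by (rule poly_roots_finite)
  have "p = smult c ([:-r, 1:] * q)"
    using real_poly_decompose_distinct_roots[OF assms(1,2)] fin assms(3)
    by (simp add: S_def c_def q_def prod.remove del: mult_pCons_left)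
  then have "poly (pderiv p) r = c * poly q r"
    by (simp add: pderiv_smult pderiv_mult pderiv_pCons del: mult_pCons_left)
  then have "poly (pderiv p) r = c * (\<Prod>s\<in>S - {r}. r - s)"
    by (simp add: q_def poly_prod)
  moreover have "{s\<in>S - {r}. r < s} = {s. poly p s = 0 \<and> r < s}"
    by (auto simp: S_def)
  ultimately show ?thesis
    using sgn_prod_diff[of "S - {r}" r] fin by (simp add: c_def sgn_mult)
qed

lemma poly_map_poly_of_real:
  fixes p :: "real poly"
  shows "poly (map_poly of_real p) (of_real x :: 'a::{real_algebra_1,comm_semiring_0}) = of_real (poly p x)"
  by (induction p) (auto simp: map_poly_pCons)

(* The degree bounds the total order of the complex zeros, so the degree-many real zeros exhaust them
   and are simple. *)
lemma map_poly_of_real_distinct_roots: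
  fixes p :: "real poly"
  assumes "p \<noteq> 0" "card {x. poly p x = 0} = degree p"
  defines "q \<equiv> map_poly complex_of_real p"
  shows "{z. poly q z = 0} = complex_of_real ` {x. poly p x = 0}"
    and "poly q z = 0 \<Longrightarrow> order z q = 1"
proof -
  define R where "R = {z. poly q z = 0}"
  have deg_q: "degree q = degree p"
    unfolding q_def by (rule degree_map_poly) simp
  have q0: "q \<noteq> 0"
    using assms(1) unfolding q_def by (simp add: map_poly_eq_0_iff)
  have fin: "finite R" unfolding R_def using q0 by (rule poly_roots_finite)
  have sub: "complex_of_real ` {x. poly p x = 0} \<subseteq> R"
    by (auto simp: R_def q_def poly_map_poly_of_real)
  have "card (complex_of_real ` {x. poly p x = 0}) = degree p"
    using assms(2) by (subst card_image) (auto intro: inj_onI)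
  then have "degree q \<le> card R"
    using card_mono[OF fin sub] deg_q by simp
  moreover have "(\<Sum>z\<in>R. 1) \<le> (\<Sum>z\<in>R. order z q)"
    using q0 by (intro sum_mono) (auto simp: R_def order_root Suc_le_eq)
  moreover have "(\<Sum>z\<in>R. order z q) \<le> degree q"
    using sum_order_le_degree[OF q0] by (simp add: R_def)
  ultimately have sum_eq: "(\<Sum>z\<in>R. 1) = (\<Sum>z\<in>R. order z q)" and card_R: "card R = degree p"
    using deg_q by simp_all
  show "{z. poly q z = 0} = complex_of_real ` {x. poly p x = 0}"
    using card_subset_eq[OF fin sub] card_R \<open>card (complex_of_real ` _) = degree p\<close>
    by (simp add: R_def)
  show "order z q = 1" if "poly q z = 0"
    using sum_mono_inv[OF sum_eq _ _ fin, of z] that q0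
    by (auto simp: R_def order_root Suc_le_eq)
qed

lemma sum_order_map_poly_of_real:
  fixes p :: "real poly"
  assumes "p \<noteq> 0" "card {x. poly p x = 0} = degree p"
  shows "(\<Sum>z\<in>{z. poly (map_poly of_real p) z = 0 \<and> P z}. order z (map_poly of_real p))
       = card {x. poly p x = 0 \<and> P (complex_of_real x)}"
proof -
  have "{z. poly (map_poly of_real p) z = 0 \<and> P z} = complex_of_real ` {x. poly p x = 0 \<and> P (of_real x)}"
    using map_poly_of_real_distinct_roots(1)[OF assms] by auto
  then have "(\<Sum>z\<in>{z. poly (map_poly of_real p) z = 0 \<and> P z}. order z (map_poly of_real p))
      = (\<Sum>z\<in>complex_of_real ` {x. poly p x = 0 \<and> P (of_real x)}. 1)"
    using map_poly_of_real_distinct_roots(2)[OF assms] by (intro sum.cong) auto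
  also have "\<dots> = card {x. poly p x = 0 \<and> P (complex_of_real x)}"
    by (simp add: card_image inj_on_def)
  finally show ?thesis .
qed

section \<open>Sign alternation\<close>

definition alternates_on :: "real poly \<Rightarrow> real set \<Rightarrow> bool" where
  "alternates_on p A \<longleftrightarrow> (\<exists>\<sigma>\<in>{-1, 1}. \<forall>a\<in>A. sgn (poly p a) = \<sigma> * (-1) ^ card {a'\<in>A. a < a'})"

lemma alternates_on_subset:
  assumes "alternates_on p A" "B \<subseteq> A" "\<And>a. a \<in> B \<Longrightarrow> card {a'\<in>A. a < a'} = card {a'\<in>B. a < a'} + d"
  shows "alternates_on p B"
proof -
  obtain \<sigma> where \<sigma>: "\<sigma> \<in> {-1, 1}" "\<forall>a\<in>A. sgn (poly p a) = \<sigma> * (-1) ^ card {a'\<in>A. a < a'}"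
    using assms(1) unfolding alternates_on_def by blast
  have "\<sigma> * (-1) ^ d \<in> {-1, 1}" using \<sigma>(1) by (cases "even d") auto
  moreover have "\<forall>a\<in>B. sgn (poly p a) = \<sigma> * (-1) ^ d * (-1) ^ card {a'\<in>B. a < a'}"
    using \<sigma>(2) assms(2,3) by (auto simp: power_add)
  ultimately show ?thesis unfolding alternates_on_def by blast
qed

lemma alternates_on_insert_greater:
  assumes alt: "alternates_on p (insert b A)" and "finite A" "\<forall>a\<in>A. a < b"
  shows "alternates_on p A"
    and "A \<noteq> {} \<Longrightarrow> \<exists>y. Max A < y \<and> y < b \<and> poly p y = 0"
proof -
  have "{a'\<in>insert b A. a < a'} = insert b {a'\<in>A. a < a'}" if "a \<in> A" for a
    using that assms(3) by auto
  then show "alternates_on p A"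
    using assms(2,3) by (intro alternates_on_subset[OF alt, of _ 1]) auto
  assume "A \<noteq> {}"
  then have Max: "Max A \<in> A" "Max A < b" using assms(2,3) by auto
  obtain \<sigma> where \<sigma>: "\<sigma> \<in> {-1, 1}"
    "\<forall>a\<in>insert b A. sgn (poly p a) = \<sigma> * (-1) ^ card {a'\<in>insert b A. a < a'}"
    using alt unfolding alternates_on_def by blast
  have "{a'\<in>insert b A. Max A < a'} = {b}"
    using assms(2,3) Max by (auto simp: leD)
  moreover have "{a'\<in>insert b A. b < a'} = {}"
    using assms(3) by auto
  ultimately have "card {a'\<in>insert b A. Max A < a'} = 1" "card {a'\<in>insert b A. b < a'} = 0"
    by (simp_all only: card.empty card_1_singleton_iff) auto
  then have "sgn (poly p (Max A)) = - \<sigma>" "sgn (poly p b) = \<sigma>"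
    using \<sigma>(2)[rule_format, of "Max A"] \<sigma>(2)[rule_format, of b] Max by auto
  then show "\<exists>y. Max A < y \<and> y < b \<and> poly p y = 0"
    using poly_IVT[OF Max(2), of p] \<sigma>(1) by (auto simp: sgn_if mult_less_0_iff split: if_splits)
qed

lemma card_roots_between_alternating:
  fixes p :: "real poly"
  assumes "finite A" "p \<noteq> 0" "alternates_on p A" "A \<subseteq> {l..u}"
  shows "card A - 1 \<le> card {x. l < x \<and> x < u \<and> poly p x = 0}"
  using assms(1,3,4)
proof (induction A arbitrary: u rule: finite_linorder_max_induct)
  case (insert b A)
  let ?R = "\<lambda>u. {x. l < x \<and> x < u \<and> poly p x = 0}"
  show ?case
  proof (cases "A = {}")
    case False
    have fin: "finite (?R v)" for v
      using poly_roots_finite[OF assms(2)] by (rule rev_finite_subset) auto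
    have "alternates_on p A"
      using alternates_on_insert_greater(1)[OF insert.prems(1) insert.hyps] .
    then have IH: "card A - 1 \<le> card (?R (Max A))"
      using insert.prems(2) insert.hyps(1) by (intro insert.IH) auto
    obtain y where y: "Max A < y" "y < b" "poly p y = 0"
      using alternates_on_insert_greater(2)[OF insert.prems(1) insert.hyps False] by blast
    have "l \<le> Max A" "b \<le> u"
      using Max_in[OF insert.hyps(1) False] insert.prems(2) by auto
    then have "insert y (?R (Max A)) \<subseteq> ?R u"
      using y by auto
    then have "card (insert y (?R (Max A))) \<le> card (?R u)"
      by (rule card_mono[OF fin])
    moreover have "y \<notin> ?R (Max A)"
      using y by simp
    ultimately have "Suc (card (?R (Max A))) \<le> card (?R u)"
      using fin by simp
    moreover have "card (insert b A) = Suc (card A)" "card A > 0"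
      using insert.hyps False by auto
    ultimately show ?thesis using IH by linarith
  qed simp
qed simp

lemma card_less_plus_card_greater:
  fixes A :: "'a::linorder set"
  assumes "finite A" "y \<notin> A"
  shows "card {a\<in>A. a < y} + card {a\<in>A. y < a} = card A"
proof -
  have "A = {a\<in>A. a < y} \<union> {a\<in>A. y < a}"
    using assms(2) by (auto simp: neq_iff) (metis linorder_neqE)
  then have "card A = card ({a\<in>A. a < y} \<union> {a\<in>A. y < a})"
    by (rule arg_cong)
  also have "\<dots> = card {a\<in>A. a < y} + card {a\<in>A. y < a}"
    using assms(1) by (intro card_Un_disjoint) auto
  finally show ?thesis by simp
qed

lemma card_roots_above_alternating_ge:
  fixes p :: "real poly"
  assumes "finite A" "p \<noteq> 0" "alternates_on p A"
  shows "card {a\<in>A. y < a} - 1 \<le> card {x. poly p x = 0 \<and> y < x}"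
proof -
  define U where "U = {a\<in>A. y < a}"
  define u where "u = Max (insert y A)"
  have "alternates_on p U"
    by (rule alternates_on_subset[OF assms(3), of _ 0]) (auto simp: U_def intro: arg_cong[where f = card])
  moreover have "U \<subseteq> {y..u}"
    using assms(1) by (auto simp: U_def u_def)
  ultimately have "card U - 1 \<le> card {x. y < x \<and> x < u \<and> poly p x = 0}"
    using assms(1,2) by (intro card_roots_between_alternating) (auto simp: U_def)
  also have "\<dots> \<le> card {x. poly p x = 0 \<and> y < x}"
    using poly_roots_finite[OF assms(2)] by (intro card_mono) (auto elim: rev_finite_subset)
  finally show ?thesis by (simp add: U_def)
qed

lemma card_roots_below_alternating_ge:
  fixes p :: "real poly"
  assumes "finite A" "p \<noteq> 0" "alternates_on p A" "y \<notin> A"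
  shows "card {a\<in>A. a < y} - 1 \<le> card {x. poly p x = 0 \<and> x < y}"
proof -
  define L where "L = {a\<in>A. a < y}"
  define l where "l = Min (insert y A)"
  have "card {a'\<in>A. a < a'} = card {a'\<in>L. a < a'} + card {a\<in>A. y < a}" if "a \<in> L" for a
  proof -
    have "{a'\<in>{a'\<in>A. a < a'}. a' < y} = {a'\<in>L. a < a'}"
      "{a'\<in>{a'\<in>A. a < a'}. y < a'} = {a\<in>A. y < a}"
      using that by (auto simp: L_def)
    then show ?thesis
      using card_less_plus_card_greater[of "{a'\<in>A. a < a'}" y] assms(1,4) by simp
  qed
  then have "alternates_on p L"
    by (intro alternates_on_subset[OF assms(3)]) (auto simp: L_def)
  moreover have "L \<subseteq> {l..y}"
    using assms(1) by (auto simp: L_def l_def)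
  ultimately have "card L - 1 \<le> card {x. l < x \<and> x < y \<and> poly p x = 0}"
    using assms(1,2) by (intro card_roots_between_alternating) (auto simp: L_def)
  also have "\<dots> \<le> card {x. poly p x = 0 \<and> x < y}"
    using poly_roots_finite[OF assms(2)] by (intro card_mono) (auto elim: rev_finite_subset)
  finally show ?thesis by (simp add: L_def)
qed

lemma card_roots_above_alternating:
  fixes p :: "real poly"
  assumes "finite A" "p \<noteq> 0" "alternates_on p A" "card {x. poly p x = 0} < card A" "y \<notin> A"
  shows "card {a\<in>A. y < a} \<le> Suc (card {x. poly p x = 0 \<and> y < x})"
    and "card {x. poly p x = 0 \<and> y < x} \<le> card {a\<in>A. y < a}"
proof -
  have roots_fin: "finite {x. poly p x = 0 \<and> P x}" for P
    using poly_roots_finite[OF assms(2)] by (rule rev_finite_subset) auto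
  have "card {x. poly p x = 0 \<and> y < x} + card {x. poly p x = 0 \<and> x < y}
      = card ({x. poly p x = 0 \<and> y < x} \<union> {x. poly p x = 0 \<and> x < y})"
    by (intro card_Un_disjoint[symmetric] roots_fin) auto
  also have "\<dots> \<le> card {x. poly p x = 0}"
    by (intro card_mono roots_fin[of "\<lambda>_. True", simplified]) auto
  finally show "card {x. poly p x = 0 \<and> y < x} \<le> card {a\<in>A. y < a}"
    using card_roots_below_alternating_ge[OF assms(1,2,3,5)] assms(4)
      card_less_plus_card_greater[OF assms(1,5)] by linarith
  show "card {a\<in>A. y < a} \<le> Suc (card {x. poly p x = 0 \<and> y < x})"
    using card_roots_above_alternating_ge[OF assms(1,2,3), of y] by linarith
qed

lemma eventually_poly_neg_at_bot:
  fixes p :: "real poly"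
  assumes "lead_coeff p * (-1) ^ degree p < 0"
  shows "eventually (\<lambda>x. poly p x < 0) at_bot"
proof -
  define r where "r = - pcompose p [:0, -1:]"
  have "lead_coeff r = - (lead_coeff p * (-1) ^ degree p)"
    unfolding r_def by (simp add: lead_coeff_comp)
  then have "lead_coeff r > 0" using assms by simp
  then obtain N where N: "\<forall>x\<ge>N. poly r x \<ge> lead_coeff r"
    using poly_pinfty_gt_lc by blast
  have "poly p x < 0" if "x \<le> -N" for x
    using N[rule_format, of "-x"] that \<open>lead_coeff r > 0\<close> by (simp add: r_def poly_pcompose)
  then show ?thesis by (rule eventually_at_bot_linorderI)
qed

section \<open>The zeros of \<open>G\<close>\<close>

lemma eventually_G_neg_at_bot: "b < 1 \<Longrightarrow> eventually (\<lambda>x. poly (G (Suc n) b) x < 0) at_bot"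
  by (rule eventually_poly_neg_at_bot)
    (simp add: degree_G coeff_G_top power_mult_distrib[symmetric])

lemma G_neg_point_below:
  assumes "b < 1" "finite S"
  obtains x where "poly (G (Suc n) b) x < 0" "x < -1" "\<forall>s\<in>S. x < s"
proof -
  have "eventually (\<lambda>x. poly (G (Suc n) b) x < 0) at_bot"
    using assms(1) by (rule eventually_G_neg_at_bot)
  moreover have "eventually (\<lambda>x. \<forall>s\<in>S. x < s) at_bot"
    using assms(2) by (intro eventually_ball_finite) (auto intro: eventually_gt_at_bot)
  moreover have "eventually (\<lambda>x::real. x < -1) at_bot"
    by (rule eventually_gt_at_bot)
  ultimately have "eventually (\<lambda>x. poly (G (Suc n) b) x < 0 \<and> x < -1 \<and> (\<forall>s\<in>S. x < s)) at_bot"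
    by eventually_elim auto
  then show ?thesis
    using that by (auto simp: eventually_at_bot_linorder)
qed

lemma sgn_G_Suc_Suc_at_root:
  assumes "b < 1" "card {x. poly (G (Suc n) b) x = 0} = n" "poly (G (Suc n) b) r = 0" "r < 0"
  shows "sgn (poly (G (Suc (Suc n)) b) r) =
    (-1) ^ n * (-1) ^ Suc (card {s. poly (G (Suc n) b) s = 0 \<and> r < s})"
proof -
  have "sgn (r * (r - 1)) = 1"
    using assms(4) by (simp add: sgn_mult)
  moreover have "sgn (poly (pderiv (G (Suc n) b)) r) =
      - ((-1) ^ n) * (-1) ^ card {s. poly (G (Suc n) b) s = 0 \<and> r < s}"
    using sgn_pderiv_distinct_roots[OF G_nonzero _ assms(3)] sgn_lead_coeff_G assms(1,2)
    by (simp add: degree_G)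
  ultimately show ?thesis
    using poly_G_Suc_Suc_at_root[OF assms(3)] by (simp add: sgn_mult)
qed

lemma sgn_G_Suc_Suc_at_zero:
  assumes "0 < b" "b < 1" "card {x. poly (G (Suc n) b) x = 0} = n"
    and neg_roots: "\<forall>x. poly (G (Suc n) b) x = 0 \<longrightarrow> x < 0"
  shows "sgn (poly (G (Suc (Suc n)) b) 0) = (-1) ^ n"
proof -
  have "poly (G (Suc n) b) 0 \<noteq> 0" "card {s. poly (G (Suc n) b) s = 0 \<and> 0 < s} = 0"
    using neg_roots by (fastforce simp: card_eq_0_iff)+
  then have "sgn (poly (G (Suc n) b) 0) = - ((-1) ^ n)"
    using sgn_poly_distinct_roots[OF G_nonzero, of b n 0] sgn_lead_coeff_G assms(2,3)
    by (simp add: degree_G)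
  then show ?thesis
    using assms(1) by (simp add: sgn_mult)
qed

lemma G_Suc_Suc_alternates:
  assumes "0 < b" "b < 1"
    and card_roots: "card {x. poly (G (Suc n) b) x = 0} = n"
    and neg_roots: "\<forall>x. poly (G (Suc n) b) x = 0 \<longrightarrow> x < 0"
  obtains x1 where "x1 < -1" "\<forall>x. poly (G (Suc n) b) x = 0 \<longrightarrow> x1 < x"
    "alternates_on (G (Suc (Suc n)) b) (insert x1 (insert 0 {x. poly (G (Suc n) b) x = 0}))"
proof -
  define Q where "Q = G (Suc (Suc n)) b"
  define S where "S = {x. poly (G (Suc n) b) x = 0}"
  have fin: "finite S"
    unfolding S_def using G_nonzero assms(2) by (intro poly_roots_finite) auto
  have S_neg: "\<forall>s\<in>S. s < 0" and card_S: "card S = n"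
    using neg_roots card_roots by (simp_all add: S_def)
  obtain x1 where x1: "poly Q x1 < 0" "x1 < -1" "\<forall>s\<in>S. x1 < s"
    unfolding Q_def using G_neg_point_below[OF assms(2) fin] .
  define A where "A = insert x1 (insert 0 S)"
  have "sgn (poly Q a) = (-1) ^ n * (-1) ^ card {a'\<in>A. a < a'}" if a: "a \<in> A" for a
  proof -
    consider "a = x1" | "a = 0" | "a \<in> S" using a by (auto simp: A_def)
    then show ?thesis
    proof cases
      case 1
      then have "{a'\<in>A. a < a'} = insert 0 S" using x1 S_neg by (auto simp: A_def)
      then have "card {a'\<in>A. a < a'} = Suc n" using fin card_S S_neg by auto
      then show ?thesis using x1 1 by simp
    next
      case 2
      then have "card {a'\<in>A. a < a'} = 0" using x1 S_neg by (auto simp: A_def card_eq_0_iff)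
      then show ?thesis
        using 2 sgn_G_Suc_Suc_at_zero[OF assms] by (simp add: Q_def)
    next
      case 3
      then have "{a'\<in>A. a < a'} = insert 0 {s\<in>S. a < s}" using x1 S_neg by (auto simp: A_def)
      moreover have "finite {s\<in>S. a < s}" "0 \<notin> {s\<in>S. a < s}"
        using fin S_neg by auto
      ultimately have "card {a'\<in>A. a < a'} = Suc (card {s. poly (G (Suc n) b) s = 0 \<and> a < s})"
        by (simp add: S_def)
      then show ?thesis
        using 3 S_neg sgn_G_Suc_Suc_at_root[OF assms(2) card_roots] by (simp add: S_def Q_def)
    qed
  qed
  moreover have "(-1::real) ^ n \<in> {-1, 1}" by (cases "even n") auto
  ultimately have "alternates_on Q A" unfolding alternates_on_def by blast
  then show ?thesis
    using that x1 by (simp add: A_def Q_def S_def)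
qed

lemma G_negative_real_roots:
  assumes "0 < b" "b < 1"
  shows "card {x. poly (G (Suc n) b) x = 0} = n \<and> (\<forall>x. poly (G (Suc n) b) x = 0 \<longrightarrow> x < 0)"
proof (induction n)
  case (Suc n)
  define Q where "Q = G (Suc (Suc n)) b"
  define S where "S = {x. poly (G (Suc n) b) x = 0}"
  obtain x1 where x1: "x1 < -1" "\<forall>x. poly (G (Suc n) b) x = 0 \<longrightarrow> x1 < x"
    and alt: "alternates_on (G (Suc (Suc n)) b) (insert x1 (insert 0 {x. poly (G (Suc n) b) x = 0}))"
    by (rule G_Suc_Suc_alternates[OF assms Suc[THEN conjunct1] Suc[THEN conjunct2]])
  have Q0: "Q \<noteq> 0" unfolding Q_def using assms(2) by (intro G_nonzero) simp
  have deg_Q: "degree Q = Suc n" unfolding Q_def using assms(2) by (intro degree_G) simp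
  have fin: "finite S" unfolding S_def using G_nonzero assms(2) by (intro poly_roots_finite) auto
  have S_neg: "\<forall>s\<in>S. s < 0" using Suc by (simp add: S_def)
  have "x1 \<notin> insert 0 S" "0 \<notin> S" "card S = n"
    using x1 S_neg Suc by (auto simp: S_def)
  then have "card (insert x1 (insert 0 S)) = Suc (Suc n)"
    using fin by simp
  moreover have "insert x1 (insert 0 S) \<subseteq> {x1..0}"
    using x1 S_neg by (auto simp: S_def less_imp_le)
  ultimately have lower: "Suc n \<le> card {x. x1 < x \<and> x < 0 \<and> poly Q x = 0}"
    using card_roots_between_alternating[OF _ Q0 alt[folded S_def Q_def]] fin by simp
  have upper: "card {x. poly Q x = 0} \<le> Suc n"
    using card_poly_roots_bound[OF Q0] deg_Q by simp
  have "{x. x1 < x \<and> x < 0 \<and> poly Q x = 0} = {x. poly Q x = 0}"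
    using lower upper poly_roots_finite[OF Q0] by (intro card_seteq) auto
  then show ?case
    using lower upper unfolding Q_def[symmetric] by auto
qed simp

lemma G_real_rooted:
  "0 < b \<Longrightarrow> b < 1 \<Longrightarrow> card {x. poly (G (Suc n) b) x = 0} = degree (G (Suc n) b)"
  using G_negative_real_roots degree_G by simp

lemma sgn_G_minus_one_card_roots:
  assumes "0 < b" "b < 1" "poly (G (Suc n) b) (-1) \<noteq> 0"
  shows "sgn (poly (G (Suc n) b) (-1)) = - ((-1) ^ n) * (-1) ^ card {x. poly (G (Suc n) b) x = 0 \<and> -1 < x}"
  using sgn_poly_distinct_roots[OF G_nonzero G_real_rooted[OF assms(1,2)] assms(3)] sgn_lead_coeff_G assms
  by simp

lemma card_roots_G_above_minus_one_Suc:
  assumes "0 < b" "b < 1" "poly (G (Suc n) b) (-1) \<noteq> 0"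
  defines "k \<equiv> \<lambda>m. card {x. poly (G (Suc m) b) x = 0 \<and> -1 < x}"
  shows "k n \<le> k (Suc n) \<and> k (Suc n) \<le> Suc (k n)"
proof -
  define Q where "Q = G (Suc (Suc n)) b"
  define S where "S = {x. poly (G (Suc n) b) x = 0}"
  obtain x1 where x1: "x1 < -1" "\<forall>x. poly (G (Suc n) b) x = 0 \<longrightarrow> x1 < x"
    and alt: "alternates_on (G (Suc (Suc n)) b) (insert x1 (insert 0 {x. poly (G (Suc n) b) x = 0}))"
    using G_Suc_Suc_alternates G_negative_real_roots assms(1,2) by blast
  define A where "A = insert x1 (insert 0 S)"
  have Q0: "Q \<noteq> 0" unfolding Q_def using assms(2) by (intro G_nonzero) simp
  have card_Q: "card {x. poly Q x = 0} = Suc n"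
    unfolding Q_def using G_negative_real_roots[OF assms(1,2)] by blast
  have card_S: "card S = n" and S_neg: "\<forall>s\<in>S. s < 0"
    using G_negative_real_roots[OF assms(1,2)] by (auto simp: S_def)
  have fin: "finite S" unfolding S_def using G_nonzero assms(2) by (intro poly_roots_finite) auto
  have "x1 \<notin> insert 0 S" "0 \<notin> S"
    using x1 S_neg by (auto simp: S_def)
  then have card_A: "card A = Suc (Suc n)"
    using fin card_S by (simp add: A_def)
  have "{a\<in>A. -1 < a} = insert 0 {s\<in>S. -1 < s}"
    using x1 by (auto simp: A_def)
  moreover have "finite {s\<in>S. -1 < s}" "0 \<notin> {s\<in>S. -1 < s}"
    using fin S_neg by auto
  ultimately have "card {a\<in>A. -1 < a} = Suc (k n)"
    by (simp add: k_def S_def)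
  moreover have "k (Suc n) = card {x. poly Q x = 0 \<and> -1 < x}"
    by (simp only: k_def Q_def)
  moreover have "-1 \<notin> A"
    using x1 assms(3) by (auto simp: A_def S_def)
  moreover have "finite A" "card {x. poly Q x = 0} < card A"
    using fin card_Q card_A by (simp_all add: A_def)
  ultimately show ?thesis
    using card_roots_above_alternating[OF _ Q0 alt[folded S_def Q_def A_def], of "-1"] by simp
qed

lemma card_roots_G_above_minus_one:
  assumes "0 < b" "b < 1" "b \<noteq> 1/2"
  shows "card {x. poly (G (Suc n) b) x = 0 \<and> -1 < x} = (if b < 1/2 then Suc n div 2 else n div 2)"
proof -
  define k where "k m = card {x. poly (G (Suc m) b) x = 0 \<and> -1 < x}" for m
  define t where "t m = (if b < 1/2 then Suc m div 2 else m div 2)" for m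
  have sgn_G: "sgn (poly (G (Suc m) b) (-1)) = (-1) ^ (Suc m + t m)" for m
  proof (cases "b < 1/2")
    case True
    then show ?thesis using sgn_G_minus_one_below_half[OF assms(1) True] by (simp add: t_def)
  next
    case False
    then have "1/2 < b" using assms(3) by simp
    then show ?thesis using sgn_G_minus_one_above_half[OF _ assms(2)] False by (simp add: t_def)
  qed
  note nonzero = G_minus_one_nonzero[OF assms]
  have parity: "even (k m) \<longleftrightarrow> even (t m)" for m
  proof -
    have "(-1::real) ^ (Suc m + t m) = - ((-1) ^ m) * (-1) ^ k m"
      using sgn_G[of m] sgn_G_minus_one_card_roots[OF assms(1,2) nonzero] by (simp add: k_def)
    then have "(-1::real) ^ k m = (-1) ^ t m"
      by (simp add: power_add)
    then show ?thesis by (simp add: neg_one_power_eq_iff)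
  qed
  have t_Suc: "t (Suc m) = t m \<or> t (Suc m) = Suc (t m)" for m
    unfolding t_def by (cases "b < 1/2") (simp_all, presburger+)
  have "k n = t n"
  proof (induction n)
    case 0
    then show ?case by (simp add: k_def t_def)
  next
    case (Suc n)
    have "k n \<le> k (Suc n) \<and> k (Suc n) \<le> Suc (k n)"
      using card_roots_G_above_minus_one_Suc[OF assms(1,2) nonzero] by (simp only: k_def)
    then show ?case
      using Suc.IH parity[of n] parity[of "Suc n"] t_Suc[of n] by presburger
  qed
  then show ?thesis by (simp add: k_def t_def)
qed

lemma card_roots_G_unit_disc:
  assumes "0 < b" "b < 1" "b \<noteq> 1/2"
  shows "card {x. poly (G (Suc n) b) x = 0 \<and> \<bar>x\<bar> < 1} = (if b < 1/2 then Suc n div 2 else n div 2)"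
    and "card {x. poly (G (Suc n) b) x = 0 \<and> 1 < \<bar>x\<bar>} = (if b < 1/2 then n div 2 else Suc n div 2)"
proof -
  define R where "R = {x. poly (G (Suc n) b) x = 0}"
  have card_R: "card R = n" and R_neg: "\<forall>x\<in>R. x < 0"
    using G_negative_real_roots[OF assms(1,2)] by (auto simp: R_def)
  have fin: "finite R" unfolding R_def using G_nonzero assms(2) by (intro poly_roots_finite) auto
  have "-1 \<notin> R" using G_minus_one_nonzero[OF assms] by (simp add: R_def)
  then have "card {x\<in>R. x < -1} + card {x\<in>R. -1 < x} = n"
    using card_less_plus_card_greater[OF fin] card_R by simp
  moreover have "{x. poly (G (Suc n) b) x = 0 \<and> \<bar>x\<bar> < 1} = {x\<in>R. -1 < x}"
    "{x. poly (G (Suc n) b) x = 0 \<and> 1 < \<bar>x\<bar>} = {x\<in>R. x < -1}"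
    using R_neg by (auto simp: R_def)
  moreover have "card {x\<in>R. -1 < x} = (if b < 1/2 then Suc n div 2 else n div 2)"
    using card_roots_G_above_minus_one[OF assms] by (simp add: R_def)
  ultimately show "card {x. poly (G (Suc n) b) x = 0 \<and> \<bar>x\<bar> < 1} = (if b < 1/2 then Suc n div 2 else n div 2)"
    and "card {x. poly (G (Suc n) b) x = 0 \<and> 1 < \<bar>x\<bar>} = (if b < 1/2 then n div 2 else Suc n div 2)"
    by (simp_all split: if_splits)
qed

theorem theorem4p7:
  fixes m :: nat and \<beta> :: real
  assumes "m \<ge> 2"
  shows "(0 < \<beta> \<and> \<beta> < 1 \<longrightarrow>
            G m \<beta> \<noteq> 0 \<and>
            (\<forall>z::complex. poly (GC m \<beta>) z = 0 \<longrightarrow>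
                 z \<in> \<real> \<and> Re z < 0 \<and> order z (GC m \<beta>) = 1))
       \<and> (0 < \<beta> \<and> \<beta> < 1/2 \<longrightarrow>
            (\<Sum>z\<in>{z. poly (GC m \<beta>) z = 0 \<and> cmod z < 1}. order z (GC m \<beta>)) = m div 2 \<and>
            (\<Sum>z\<in>{z. poly (GC m \<beta>) z = 0 \<and> cmod z > 1}. order z (GC m \<beta>)) = (m - 1) div 2)
       \<and> (1/2 < \<beta> \<and> \<beta> < 1 \<longrightarrow>
            (\<Sum>z\<in>{z. poly (GC m \<beta>) z = 0 \<and> cmod z < 1}. order z (GC m \<beta>)) = (m - 1) div 2 \<and>
            (\<Sum>z\<in>{z. poly (GC m \<beta>) z = 0 \<and> cmod z > 1}. order z (GC m \<beta>)) = m div 2)"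
proof -
  obtain n where m: "m = Suc n" using assms by (cases m) auto
  have roots: "poly (GC m \<beta>) z = 0 \<longleftrightarrow> z \<in> complex_of_real ` {x. poly (G m \<beta>) x = 0}"
    and simple: "poly (GC m \<beta>) z = 0 \<Longrightarrow> order z (GC m \<beta>) = 1"
    and sum_order: "(\<Sum>z\<in>{z. poly (GC m \<beta>) z = 0 \<and> P z}. order z (GC m \<beta>))
                    = card {x. poly (G m \<beta>) x = 0 \<and> P (complex_of_real x)}"
    if "0 < \<beta>" "\<beta> < 1" for z P
    using map_poly_of_real_distinct_roots[OF G_nonzero G_real_rooted[OF that]]
      sum_order_map_poly_of_real[OF G_nonzero G_real_rooted[OF that]] that
    unfolding GC_def m by auto
  have "0 < \<beta> \<Longrightarrow> \<beta> < 1 \<Longrightarrow> poly (G m \<beta>) x = 0 \<Longrightarrow> x < 0" for x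
    using G_negative_real_roots unfolding m by blast
  then show ?thesis
    using G_nonzero roots simple sum_order card_roots_G_unit_disc[of \<beta> n] unfolding m
    by (auto simp: norm_of_real)
qed

end
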